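(* Assume the approximate realizability assumption holds with $\epsilon_1=0$, i.e. for every $\pi\in\Pi$, $$\min_{f\in\mathcal F}\max_{\pi'\in\Pi}\Vert f-\mathcal T_r^\pi f\Vert_{2,d^{\pi'}}^2\le 0\quad\text{and}\quad \min_{g\in\mathcal G}\max_{\pi'\in\Pi}\Vert g-\mathcal T_c^\pi g\Vert_{2,d^{\pi'}}^2\le 0,$$ and assume the behavior policy satisfies $\mu\in\Pi$. Fix any $\beta\ge 0$ and $\lambda>0$. For each $\pi\in\Pi$ let $$f_r^\pi\in\arg\min_{f\in\mathcal F}\big[\mathcal L_\mu(\pi,f)+\beta\,\mathcal E_\mu(\pi,f)\big],\qquad f_c^\pi\in\arg\min_{g\in\mathcal G}\big[-\lambda\,\mathcal L_\mu(\pi,g)+\beta\,\hat{\mathcal E}_\mu(\pi,g)\big],$$ and let $$\hat\pi^*\in\arg\max_{\pi\in\Pi}\Big[\mathcal L_\mu(\pi,f_r^\pi)-\lambda\{\mathcal L_\mu(\pi,f_c^\pi)\}_+\Big]$$ (these optimizers being assumed to exist). Then $J_r(\hat\pi^* )\ge J_r(\mu)$ and $\{J_c(\hat\pi^* )\}_+\le\{J_c(\mu)\}_++\frac{1}{\lambda}$.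
   Context: Constrained MDP $(\mathcal S,\mathcal A,\mathcal P,R,C,\gamma,\rho)$: state space $\mathcal S$ (possibly infinite), finite action set $\mathcal A$, transition kernel $\mathcal P:\mathcal S\times\mathcal A\to\Delta(\mathcal S)$, reward $R:\mathcal S\times\mathcal A\to[0,1]$, cost $C:\mathcal S\times\mathcal A\to[-1,1]$, discount $\gamma\in[0,1)$, initial state distribution $\rho$. Let $V_{\max}=1/(1-\gamma)$. For a stationary policy $\pi:\mathcal S\to\Delta(\mathcal A)$, $Q_r^\pi(s,a)=\mathbb E[\sum_{t\ge0}\gamma^t R(s_t,a_t)\mid s_0=s,a_0=a,\ a_t\sim\pi(\cdot|s_t),\ s_{t+1}\sim\mathcal P(\cdot|s_t,a_t)]$, $Q_c^\pi$ likewise with $C$; $V_\diamond^\pi(s)=\sum_a\pi(a|s)Q_\diamond^\pi(s,a)$; $J_r(\pi)=(1-\gamma)\mathbb E_{s\sim\rho}[V_r^\pi(s)]$, $J_c(\pi)=(1-\gamma)\mathbb E_{s\sim\rho}[V_c^\pi(s)]$. The discounted occupancy is $d^\pi(s,a)=(1-\gamma)\mathbb E[\sum_{t\ge0}\gamma^t\mathbb 1(s_t=s,a_t=a)]$ with $s_0\sim\rho$, $a_t\sim\pi(\cdot|s_t)$. For $f:\mathcal S\times\mathcal A\to\mathbb R$ and a policy $\pi$, $f(s,\pi):=\sum_a\pi(a|s)f(s,a)$. Bellman operators: $(\mathcal T_r^\pi f)(s,a)=R(s,a)+\gamma\mathbb E_{s'\sim\mathcal P(\cdot|s,a)}[f(s',\pi)]$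 and $(\mathcal T_c^\pi f)(s,a)=C(s,a)+\gamma\mathbb E_{s'\sim\mathcal P(\cdot|s,a)}[f(s',\pi)]$. $\Vert g\Vert_{2,\nu}=\sqrt{\mathbb E_{\nu}[g^2]}$, and $\{x\}_+=\max\{x,0\}$. Function classes: a policy class $\Pi$; $\mathcal F\subseteq\{f:\mathcal S\times\mathcal A\to[0,V_{\max}]\}$; $\mathcal G\subseteq\{g:\mathcal S\times\mathcal A\to[-V_{\max},V_{\max}]\}$; $\mathcal W\subseteq\{w:\mathcal S\times\mathcal A\to[0,B_w]\}$ containing the constant function $1$. The data distribution $\mu\in\Delta(\mathcal S\times\mathcal A)$ is the discounted state-action occupancy of a behavior policy, also denoted $\mu$. Define $\mathcal L_\mu(\pi,f)=\mathbb E_{(s,a)\sim\mu}[f(s,\pi)-f(s,a)]$, $\mathcal E_\mu(\pi,f)=\max_{w\in\mathcal W}|\mathbb E_\mu[w(s,a)(f-\mathcal T_r^\pi f)(s,a)]|$, and $\hat{\mathcal E}_\mu(\pi,f)=\max_{w\in\mathcal W}|\mathbb E_\mu[w(s,a)(f-\mathcal T_c^\pi f)(s,a)]|$. *)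

theory Defs
  imports "HOL-Probability.Probability"
begin

definition SA :: "'s measure \<Rightarrow> ('s \<times> 'a) measure" where
  "SA M = M \<Otimes>\<^sub>M count_space UNIV"

definition act_dist :: "'s measure \<Rightarrow> ('s \<Rightarrow> 'a pmf) \<Rightarrow> 's \<Rightarrow> ('s \<times> 'a) measure" where
  "act_dist M pol s = distr (measure_pmf (pol s)) (SA M) (\<lambda>a. (s, a))"

definition nxt :: "'s measure \<Rightarrow> ('s \<Rightarrow> 'a \<Rightarrow> 's measure) \<Rightarrow> ('s \<Rightarrow> 'a pmf)
    \<Rightarrow> 's \<times> 'a \<Rightarrow> ('s \<times> 'a) measure" where
  "nxt M P pol x = P (fst x) (snd x) \<bind> act_dist M pol"

primrec sa_traj :: "'s measure \<Rightarrow> ('s \<Rightarrow> 'a \<Rightarrow> 's measure) \<Rightarrow> ('s \<Rightarrow> 'a pmf)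
    \<Rightarrow> nat \<Rightarrow> 's \<times> 'a \<Rightarrow> ('s \<times> 'a) measure" where
  "sa_traj M P pol 0 x = return (SA M) x"
| "sa_traj M P pol (Suc t) x = sa_traj M P pol t x \<bind> nxt M P pol"

definition sa_dist :: "'s measure \<Rightarrow> ('s \<Rightarrow> 'a \<Rightarrow> 's measure) \<Rightarrow> 's measure
    \<Rightarrow> ('s \<Rightarrow> 'a pmf) \<Rightarrow> nat \<Rightarrow> ('s \<times> 'a) measure" where
  "sa_dist M P rho pol t = (rho \<bind> act_dist M pol) \<bind> sa_traj M P pol t"

definition polval :: "('s \<Rightarrow> 'a::finite \<Rightarrow> real) \<Rightarrow> ('s \<Rightarrow> 'a pmf) \<Rightarrow> 's \<Rightarrow> real" where
  "polval f pol s = (\<Sum>a\<in>UNIV. pmf (pol s) a * f s a)"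

definition Qfun :: "'s measure \<Rightarrow> ('s \<Rightarrow> 'a \<Rightarrow> 's measure) \<Rightarrow> real \<Rightarrow> ('s \<Rightarrow> 'a pmf)
    \<Rightarrow> ('s \<Rightarrow> 'a \<Rightarrow> real) \<Rightarrow> 's \<Rightarrow> 'a \<Rightarrow> real" where
  "Qfun M P gamma pol Rw s a =
     (\<Sum>t. gamma ^ t * (\<integral>z. Rw (fst z) (snd z) \<partial>(sa_traj M P pol t (s, a))))"

definition Vfun :: "'s measure \<Rightarrow> ('s \<Rightarrow> 'a::finite \<Rightarrow> 's measure) \<Rightarrow> real \<Rightarrow> ('s \<Rightarrow> 'a pmf)
    \<Rightarrow> ('s \<Rightarrow> 'a \<Rightarrow> real) \<Rightarrow> 's \<Rightarrow> real" where
  "Vfun M P gamma pol Rw = polval (Qfun M P gamma pol Rw) pol"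

definition Jfun :: "'s measure \<Rightarrow> ('s \<Rightarrow> 'a::finite \<Rightarrow> 's measure) \<Rightarrow> real \<Rightarrow> 's measure
    \<Rightarrow> ('s \<Rightarrow> 'a pmf) \<Rightarrow> ('s \<Rightarrow> 'a \<Rightarrow> real) \<Rightarrow> real" where
  "Jfun M P gamma rho pol Rw = (1 - gamma) * (\<integral>s. Vfun M P gamma pol Rw s \<partial>rho)"

definition occ :: "'s measure \<Rightarrow> ('s \<Rightarrow> 'a \<Rightarrow> 's measure) \<Rightarrow> real \<Rightarrow> 's measure
    \<Rightarrow> ('s \<Rightarrow> 'a pmf) \<Rightarrow> ('s \<times> 'a) measure" where
  "occ M P gamma rho pol = measure_of (space (SA M)) (sets (SA M))
     (\<lambda>A. ennreal (1 - gamma) * (\<Sum>t. ennreal (gamma ^ t) * emeasure (sa_dist M P rho pol t) A))"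

definition bellman :: "('s \<Rightarrow> 'a \<Rightarrow> 's measure) \<Rightarrow> real \<Rightarrow> ('s \<Rightarrow> 'a pmf)
    \<Rightarrow> ('s \<Rightarrow> 'a::finite \<Rightarrow> real) \<Rightarrow> ('s \<Rightarrow> 'a \<Rightarrow> real) \<Rightarrow> 's \<Rightarrow> 'a \<Rightarrow> real" where
  "bellman P gamma pol Rw f s a = Rw s a + gamma * (\<integral>s'. polval f pol s' \<partial>(P s a))"

definition norm2 :: "('s \<times> 'a) measure \<Rightarrow> ('s \<Rightarrow> 'a \<Rightarrow> real) \<Rightarrow> real" where
  "norm2 nu g = sqrt (\<integral>z. (g (fst z) (snd z))\<^sup>2 \<partial>nu)"

definition Lmu :: "('s \<times> 'a::finite) measure \<Rightarrow> ('s \<Rightarrow> 'a pmf) \<Rightarrow> ('s \<Rightarrow> 'a \<Rightarrow> real) \<Rightarrow> real" where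
  "Lmu mu pol f = (\<integral>z. polval f pol (fst z) - f (fst z) (snd z) \<partial>mu)"

definition Emu :: "('s \<times> 'a) measure \<Rightarrow> ('s \<Rightarrow> 'a \<Rightarrow> real) set
    \<Rightarrow> ('s \<Rightarrow> 'a \<Rightarrow> real) \<Rightarrow> ('s \<Rightarrow> 'a \<Rightarrow> real) \<Rightarrow> real" where
  "Emu mu W f Tf = (SUP w\<in>W. \<bar>\<integral>z. w (fst z) (snd z) * (f (fst z) (snd z) - Tf (fst z) (snd z)) \<partial>mu\<bar>)"

end

theory Submission
  imports Defs
begin

text \<open>
  The discounted occupancy measure d of a policy nu satisfies the Bellman flow equation
  E_d[h] = (1 - gamma) E_rho[h(s, nu)] + gamma E_d[E_{s' ~ P(s, a)} h(s', nu)].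
  If f is a fixed point of the Bellman operator of pi almost everywhere on the occupancy measures
  of pi and of mu, the flow equation for pi gives J(pi) = (1 - gamma) E_rho[f(s, pi)], and the flow
  equation for mu, applied to (s, a) |-> f(s, pi), gives L_mu(pi, f) = J(pi) - J(mu).
  Such an f has zero Bellman penalty while every penalty is nonnegative, so the regularized critics
  satisfy L_mu(pi, f_r) <= J_r(pi) - J_r(mu) and J_c(pi) - J_c(mu) <= L_mu(pi, f_c).
  As L_mu(mu, g) = 0 for every g, comparing the actor objective at the maximizer with its value
  at mu gives lambda {L_mu(pi, f_c)}_+ <= L_mu(pi, f_r) <= J_r(pi) - J_r(mu) <= 1,
  from which both bounds follow.
\<close>

section \<open>Integrals against probability kernels\<close>

lemma space_prob_algebra_memberD:
  assumes "N \<in> space (prob_algebra T)"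
  shows "prob_space N" and "sets N = sets T" and "space N = space T"
proof -
  show "prob_space N" and sets: "sets N = sets T"
    using assms by (simp_all add: space_prob_algebra)
  from sets show "space N = space T"
    by (rule sets_eq_imp_space_eq)
qed

lemma integrable_prob_algebra:
  fixes h :: "'b \<Rightarrow> real"
  assumes N: "N \<in> space (prob_algebra T)" and h: "h \<in> borel_measurable T"
    and bound: "\<And>x. x \<in> space T \<Longrightarrow> \<bar>h x\<bar> \<le> B"
  shows "integrable N h"
proof -
  interpret prob_space N
    using space_prob_algebra_memberD(1)[OF N] .
  show ?thesis
    using h bound space_prob_algebra_memberD(2,3)[OF N]
    by (intro integrable_const_bound[where B=B] AE_I2) (auto cong: measurable_cong_sets)
qed

lemma abs_integral_prob_algebra_le:
  fixes h :: "'b \<Rightarrow> real"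
  assumes N: "N \<in> space (prob_algebra T)" and h: "h \<in> borel_measurable T"
    and bound: "\<And>x. x \<in> space T \<Longrightarrow> \<bar>h x\<bar> \<le> B"
  shows "\<bar>\<integral>x. h x \<partial>N\<bar> \<le> B"
proof -
  interpret prob_space N
    using space_prob_algebra_memberD(1)[OF N] .
  have "\<bar>\<integral>x. h x \<partial>N\<bar> \<le> (\<integral>x. \<bar>h x\<bar> \<partial>N)"
    by (rule integral_abs_bound)
  also have "\<dots> \<le> B"
    using integrable_prob_algebra[OF N h bound] bound space_prob_algebra_memberD(3)[OF N]
    by (intro integral_le_const AE_I2) auto
  finally show ?thesis .
qed

lemma integral_bind_prob_algebra:
  fixes h :: "'b \<Rightarrow> real"
  assumes N: "N \<in> space (prob_algebra L)" and K: "K \<in> L \<rightarrow>\<^sub>M prob_algebra T"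
    and h: "h \<in> borel_measurable T" and bound: "\<And>x. x \<in> space T \<Longrightarrow> \<bar>h x\<bar> \<le> B"
  shows "(\<integral>x. h x \<partial>(N \<bind> K)) = (\<integral>x. (\<integral>y. h y \<partial>K x) \<partial>N)"
proof -
  note N_sets = space_prob_algebra_memberD(2,3)[OF N]
  have K': "K \<in> N \<rightarrow>\<^sub>M subprob_algebra T"
    using measurable_prob_algebraD[OF K] by (simp cong: measurable_cong_sets add: N_sets)
  have "AE x in N. emeasure (K x) (space (K x)) \<le> ennreal 1"
    using measurable_space[OF K] N_sets
    by (intro AE_I2) (auto simp: space_prob_algebra prob_space.emeasure_space_1)
  with space_prob_algebra_memberD(1)[OF N] show ?thesis
    by (intro integral_bind[OF h bound K', where B'=1]) (auto intro: prob_space.finite_measure)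
qed

lemma bind_prob_algebra:
  assumes "N \<in> space (prob_algebra L)" and "K \<in> L \<rightarrow>\<^sub>M prob_algebra T"
  shows "N \<bind> K \<in> space (prob_algebra T)"
  using prob_space_bind'[OF assms] sets_bind'[OF assms] by (simp add: space_prob_algebra)

lemma integral_kernel_measurable:
  fixes h :: "'b \<Rightarrow> real"
  assumes "K \<in> L \<rightarrow>\<^sub>M prob_algebra T" and "h \<in> borel_measurable T"
  shows "(\<lambda>x. \<integral>y. h y \<partial>K x) \<in> borel_measurable L"
  using assms
  by (intro measurable_compose[OF measurable_prob_algebraD integral_measurable_subprob_algebra])

section \<open>Discounted series\<close>

lemma summable_geometric_times_bounded:
  fixes x :: "nat \<Rightarrow> real"
  assumes g: "0 \<le> g" "g < 1" and bound: "\<And>t. \<bar>x t\<bar> \<le> B"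
  shows "summable (\<lambda>t. g ^ t * x t)"
proof (rule summable_comparison_test)
  show "\<exists>N. \<forall>t\<ge>N. norm (g ^ t * x t) \<le> B * g ^ t"
    using g bound by (auto simp: abs_mult mult.commute intro!: mult_right_mono)
  show "summable (\<lambda>t. B * g ^ t)"
    using g by (intro summable_mult summable_geometric) auto
qed

lemma suminf_geometric_split_head:
  fixes x :: "nat \<Rightarrow> real"
  assumes g: "0 \<le> g" "g < 1" and bound: "\<And>t. \<bar>x t\<bar> \<le> B"
  shows "(\<Sum>t. g ^ t * x t) = x 0 + g * (\<Sum>t. g ^ t * x (Suc t))"
proof -
  have "g * (\<Sum>t. g ^ t * x (Suc t)) = (\<Sum>t. g ^ Suc t * x (Suc t))"
    using summable_geometric_times_bounded[OF g bound]
    by (subst suminf_mult[symmetric]) (simp_all add: mult.assoc)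
  also have "\<dots> = (\<Sum>t. g ^ t * x t) - x 0"
    using suminf_split_head[OF summable_geometric_times_bounded[OF g bound]] by simp
  finally show ?thesis by simp
qed

lemma integral_suminf_geometric:
  fixes u :: "nat \<Rightarrow> 'b \<Rightarrow> real"
  assumes g: "0 \<le> g" "g < 1" and N: "N \<in> space (prob_algebra T)"
    and u: "\<And>t. u t \<in> borel_measurable T" and bound: "\<And>t x. x \<in> space T \<Longrightarrow> \<bar>u t x\<bar> \<le> B"
  shows "(\<integral>x. (\<Sum>t. g ^ t * u t x) \<partial>N) = (\<Sum>t. g ^ t * (\<integral>x. u t x \<partial>N))"
proof -
  note space = space_prob_algebra_memberD(3)[OF N]
  have gu: "(\<lambda>x. g ^ t * u t x) \<in> borel_measurable T" for t
    by (intro borel_measurable_times borel_measurable_const u)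
  have gu_bound: "\<bar>g ^ t * u t x\<bar> \<le> g ^ t * B" if "x \<in> space T" for t x
    using g bound[OF that] by (auto simp: abs_mult intro: mult_left_mono)
  have "(\<integral>x. (\<Sum>t. g ^ t * u t x) \<partial>N) = (\<Sum>t. \<integral>x. g ^ t * u t x \<partial>N)"
  proof (rule integral_suminf)
    show "integrable N (\<lambda>x. g ^ t * u t x)" for t
      by (rule integrable_prob_algebra[OF N gu gu_bound])
    have "summable (\<lambda>t. g ^ t * \<bar>u t x\<bar>)" if "x \<in> space T" for x
      by (rule summable_geometric_times_bounded[OF g, where B=B]) (simp add: bound[OF that])
    then show "AE x in N. summable (\<lambda>t. norm (g ^ t * u t x))"
      using g space by (intro AE_I2) (simp add: abs_mult)
    have integral_bound: "\<bar>\<integral>x. norm (g ^ t * u t x) \<partial>N\<bar> \<le> g ^ t * B" for t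
      using borel_measurable_abs[OF gu] gu_bound
      by (intro abs_integral_prob_algebra_le[OF N]) simp_all
    show "summable (\<lambda>t. \<integral>x. norm (g ^ t * u t x) \<partial>N)"
    proof (rule summable_comparison_test)
      show "summable (\<lambda>t. B * g ^ t)"
        using g by (intro summable_mult summable_geometric) auto
    qed (use integral_bound in \<open>auto simp: mult.commute\<close>)
  qed
  then show ?thesis by simp
qed

section \<open>Policies and Bellman penalties\<close>

definition measurable_policy :: "'s measure \<Rightarrow> ('s \<Rightarrow> 'a pmf) \<Rightarrow> bool" where
  "measurable_policy M pol \<longleftrightarrow> (\<forall>a. (\<lambda>s. pmf (pol s) a) \<in> borel_measurable M)"

lemma polval_abs_le:
  assumes "\<And>a. \<bar>f s a\<bar> \<le> B"
  shows "\<bar>polval f pol s\<bar> \<le> B"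
proof -
  have "\<bar>polval f pol s\<bar> \<le> (\<Sum>a\<in>UNIV. pmf (pol s) a * B)"
    unfolding polval_def using assms
    by (intro order.trans[OF sum_abs] sum_mono) (auto simp: abs_mult intro: mult_left_mono)
  also have "\<dots> = B"
    by (simp add: sum_distrib_right[symmetric] sum_pmf_eq_1)
  finally show ?thesis .
qed

lemma polval_const: "polval (\<lambda>s (a::'a::finite). c s) pol s = c s"
  by (simp add: polval_def sum_distrib_right[symmetric] sum_pmf_eq_1)

lemma polval_suminf:
  assumes "\<And>a. summable (\<lambda>t. u t s a)"
  shows "polval (\<lambda>s a. \<Sum>t. u t s a) pol s = (\<Sum>t. polval (u t) pol s)"
proof -
  have "polval (\<lambda>s a. \<Sum>t. u t s a) pol s = (\<Sum>a\<in>UNIV. \<Sum>t. pmf (pol s) a * u t s a)"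
    unfolding polval_def using assms by (simp add: suminf_mult)
  also have "\<dots> = (\<Sum>t. polval (u t) pol s)"
    unfolding polval_def using assms by (intro suminf_sum[symmetric] summable_mult)
  finally show ?thesis .
qed

lemma polval_measurable:
  assumes pol: "measurable_policy M pol"
    and f: "(\<lambda>x. f (fst x) (snd x)) \<in> borel_measurable (SA M)"
  shows "polval f pol \<in> borel_measurable M"
proof -
  have "(\<lambda>s. pmf (pol s) a) \<in> borel_measurable M" for a
    using pol by (simp add: measurable_policy_def)
  moreover have "(\<lambda>s. f s a) \<in> borel_measurable M" for a
    using measurable_compose[OF measurable_Pair2' f[unfolded SA_def], of a] by simp
  ultimately show ?thesis
    unfolding polval_def[abs_def] by measurable
qed

lemma measure_pmf_prob_kernel:
  fixes pol :: "'s \<Rightarrow> 'a::finite pmf"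
  assumes pol: "measurable_policy M pol"
  shows "(\<lambda>s. measure_pmf (pol s)) \<in> M \<rightarrow>\<^sub>M prob_algebra (count_space UNIV)"
proof (rule measurable_prob_algebraI)
  show "(\<lambda>s. measure_pmf (pol s)) \<in> M \<rightarrow>\<^sub>M subprob_algebra (count_space UNIV)"
  proof (rule measurable_subprob_algebra)
    fix A :: "'a set"
    have "(\<lambda>s. pmf (pol s) a) \<in> borel_measurable M" for a
      using pol by (simp add: measurable_policy_def)
    then have "(\<lambda>s. ennreal (\<Sum>a\<in>A. pmf (pol s) a)) \<in> borel_measurable M"
      by measurable
    then show "(\<lambda>s. emeasure (measure_pmf (pol s)) A) \<in> borel_measurable M"
      by (simp add: emeasure_measure_pmf_finite)
  qed (auto simp: measure_pmf.subprob_space_axioms)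
qed (rule measure_pmf.prob_space_axioms)

lemma act_dist_prob_kernel:
  fixes pol :: "'s \<Rightarrow> 'a::finite pmf"
  assumes "measurable_policy M pol"
  shows "act_dist M pol \<in> M \<rightarrow>\<^sub>M prob_algebra (SA M)"
  unfolding act_dist_def[abs_def] SA_def
  by (rule measurable_distr_prob_space2[OF measure_pmf_prob_kernel[OF assms]]) simp

lemma integral_act_dist:
  fixes h :: "'s \<times> 'a::finite \<Rightarrow> real"
  assumes "s \<in> space M" and "h \<in> borel_measurable (SA M)"
  shows "(\<integral>x. h x \<partial>act_dist M pol s) = polval (\<lambda>s a. h (s, a)) pol s"
proof -
  have "(\<integral>x. h x \<partial>act_dist M pol s) = (\<integral>a. h (s, a) \<partial>measure_pmf (pol s))"
    unfolding act_dist_def using assms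
    by (intro integral_distr) (auto simp: SA_def space_pair_measure)
  also have "\<dots> = (\<Sum>a\<in>UNIV. pmf (pol s) a *\<^sub>R h (s, a))"
    by (rule integral_measure_pmf) auto
  finally show ?thesis by (simp add: polval_def)
qed

text \<open>The bound on W is needed only because Emu is a supremum in the reals,
  whose value is junk unless the set is bounded above.\<close>

lemma Emu_nonneg:
  assumes N: "N \<in> space (prob_algebra T)" and W: "W \<noteq> {}"
    and W_meas: "\<And>w. w \<in> W \<Longrightarrow> (\<lambda>z. w (fst z) (snd z)) \<in> borel_measurable T"
    and W_bound: "\<And>w s a. w \<in> W \<Longrightarrow> \<bar>w s a\<bar> \<le> Bw"
    and d_meas: "(\<lambda>z. f (fst z) (snd z) - Tf (fst z) (snd z)) \<in> borel_measurable T"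
    and d_bound: "\<And>z. z \<in> space T \<Longrightarrow> \<bar>f (fst z) (snd z) - Tf (fst z) (snd z)\<bar> \<le> Bd"
  shows "0 \<le> Emu N W f Tf"
proof -
  define d where "d z = f (fst z) (snd z) - Tf (fst z) (snd z)" for z
  have "\<bar>\<integral>z. w (fst z) (snd z) * d z \<partial>N\<bar> \<le> Bw * Bd" if w: "w \<in> W" for w
  proof (rule abs_integral_prob_algebra_le[OF N])
    show "(\<lambda>z. w (fst z) (snd z) * d z) \<in> borel_measurable T"
      using W_meas[OF w] d_meas unfolding d_def by (rule borel_measurable_times)
    fix z assume "z \<in> space T"
    then show "\<bar>w (fst z) (snd z) * d z\<bar> \<le> Bw * Bd"
      unfolding abs_mult d_def
      by (intro mult_mono W_bound[OF w] d_bound)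
        (auto intro: order.trans[OF abs_ge_zero W_bound[OF w]])
  qed
  then have "bdd_above ((\<lambda>w. \<bar>\<integral>z. w (fst z) (snd z) * d z \<partial>N\<bar>) ` W)"
    by (intro bdd_aboveI2)
  with W show ?thesis
    unfolding Emu_def d_def[symmetric] by (auto intro: cSUP_upper2)
qed

lemma Emu_eq_0_if_AE:
  assumes "W \<noteq> {}" and "AE z in N. f (fst z) (snd z) = Tf (fst z) (snd z)"
  shows "Emu N W f Tf = 0"
proof -
  have "(\<integral>z. w (fst z) (snd z) * (f (fst z) (snd z) - Tf (fst z) (snd z)) \<partial>N) = 0" for w
    using assms(2) by (intro integral_eq_zero_AE) auto
  with assms(1) show ?thesis
    by (simp add: Emu_def)
qed

lemma AE_zero_if_norm2_le_0:
  assumes "integrable N (\<lambda>z. (g (fst z) (snd z))\<^sup>2)" and "(norm2 N g)\<^sup>2 \<le> 0"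
  shows "AE z in N. g (fst z) (snd z) = 0"
proof -
  have "0 \<le> (\<integral>z. (g (fst z) (snd z))\<^sup>2 \<partial>N)"
    by (rule Bochner_Integration.integral_nonneg) simp
  with assms(2) have "(\<integral>z. (g (fst z) (snd z))\<^sup>2 \<partial>N) = 0"
    by (simp add: norm2_def)
  with assms(1) have "AE z in N. (g (fst z) (snd z))\<^sup>2 = 0"
    by (subst integral_nonneg_eq_0_iff_AE[symmetric]) auto
  then show ?thesis by simp
qed

definition bounded_measurable :: "('s \<times> 'a) measure \<Rightarrow> ('s \<Rightarrow> 'a \<Rightarrow> real) \<Rightarrow> bool" where
  "bounded_measurable N f \<longleftrightarrow>
     (\<lambda>z. f (fst z) (snd z)) \<in> borel_measurable N \<and> (\<exists>B. \<forall>s a. \<bar>f s a\<bar> \<le> B)"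

lemma bounded_measurableI:
  assumes "(\<lambda>z. f (fst z) (snd z)) \<in> borel_measurable N" and "\<And>s a. lo \<le> f s a \<and> f s a \<le> hi"
  shows "bounded_measurable N f"
proof -
  have "\<bar>f s a\<bar> \<le> max \<bar>lo\<bar> \<bar>hi\<bar>" for s a
    using assms(2)[of s a] by linarith
  with assms(1) show ?thesis
    unfolding bounded_measurable_def by blast
qed

section \<open>Occupancy measures and the Bellman flow equation\<close>

locale discounted_mdp =
  fixes M :: "'s measure" and P :: "'s \<Rightarrow> 'a::finite \<Rightarrow> 's measure"
    and gamma :: real and rho :: "'s measure"
  assumes gamma: "0 \<le> gamma" "gamma < 1"
    and kernel: "(\<lambda>x. P (fst x) (snd x)) \<in> SA M \<rightarrow>\<^sub>M prob_algebra M"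
    and rho: "prob_space rho" "sets rho = sets M"
begin

abbreviation occupancy :: "('s \<Rightarrow> 'a pmf) \<Rightarrow> ('s \<times> 'a) measure" where
  "occupancy \<equiv> occ M P gamma rho"

abbreviation J :: "('s \<Rightarrow> 'a pmf) \<Rightarrow> ('s \<Rightarrow> 'a \<Rightarrow> real) \<Rightarrow> real" where
  "J \<equiv> Jfun M P gamma rho"

abbreviation bellman_residual ::
    "('s \<Rightarrow> 'a pmf) \<Rightarrow> ('s \<Rightarrow> 'a \<Rightarrow> real) \<Rightarrow> ('s \<Rightarrow> 'a \<Rightarrow> real) \<Rightarrow> 's \<times> 'a \<Rightarrow> real" where
  "bellman_residual pol Rw f z \<equiv> f (fst z) (snd z) - bellman P gamma pol Rw f (fst z) (snd z)"

abbreviation bellman_consistent ::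
    "('s \<Rightarrow> 'a pmf) \<Rightarrow> ('s \<Rightarrow> 'a pmf) \<Rightarrow> ('s \<Rightarrow> 'a \<Rightarrow> real) \<Rightarrow> ('s \<Rightarrow> 'a \<Rightarrow> real) \<Rightarrow> bool" where
  "bellman_consistent nu pol Rw f \<equiv>
     AE z in occupancy nu. f (fst z) (snd z) = bellman P gamma pol Rw f (fst z) (snd z)"

definition next_value :: "('s \<Rightarrow> 'a pmf) \<Rightarrow> ('s \<Rightarrow> 'a \<Rightarrow> real) \<Rightarrow> 's \<times> 'a \<Rightarrow> real" where
  "next_value pol f x = (\<integral>s'. polval f pol s' \<partial>P (fst x) (snd x))"

lemma bellman_eq_next_value:
  "bellman P gamma pol Rw f s a = Rw s a + gamma * next_value pol f (s, a)"
  by (simp add: bellman_def next_value_def)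

lemma rho_prob_algebra: "rho \<in> space (prob_algebra M)"
  using rho by (simp add: space_prob_algebra)

lemma space_SA: "space (SA M) = space M \<times> UNIV"
  by (simp add: SA_def space_pair_measure)

lemma nxt_prob_kernel:
  "measurable_policy M pol \<Longrightarrow> nxt M P pol \<in> SA M \<rightarrow>\<^sub>M prob_algebra (SA M)"
  unfolding nxt_def[abs_def]
  by (intro measurable_bind_prob_space[OF kernel] act_dist_prob_kernel)

lemma sa_traj_prob_kernel:
  assumes pol: "measurable_policy M pol"
  shows "sa_traj M P pol t \<in> SA M \<rightarrow>\<^sub>M prob_algebra (SA M)"
proof (induction t)
  case 0
  have "sa_traj M P pol 0 = return (SA M)" by auto
  then show ?case by simp
next
  case (Suc t)
  have "sa_traj M P pol (Suc t) = (\<lambda>x. sa_traj M P pol t x \<bind> nxt M P pol)" by auto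
  then show ?case
    using measurable_bind_prob_space[OF Suc nxt_prob_kernel[OF pol]] by simp
qed

lemma start_prob_algebra:
  fixes pol :: "'s \<Rightarrow> 'a pmf"
  shows "measurable_policy M pol \<Longrightarrow> rho \<bind> act_dist M pol \<in> space (prob_algebra (SA M))"
  by (rule bind_prob_algebra[OF rho_prob_algebra act_dist_prob_kernel])

lemma sa_dist_prob_algebra:
  "measurable_policy M pol \<Longrightarrow> sa_dist M P rho pol t \<in> space (prob_algebra (SA M))"
  unfolding sa_dist_def by (rule bind_prob_algebra[OF start_prob_algebra sa_traj_prob_kernel])

lemma sa_dist_0: "measurable_policy M pol \<Longrightarrow> sa_dist M P rho pol 0 = rho \<bind> act_dist M pol"
  unfolding sa_dist_def sa_traj.simps(1)
  by (rule bind_return'') (simp add: space_prob_algebra_memberD(2)[OF start_prob_algebra])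

lemma sa_dist_Suc:
  assumes pol: "measurable_policy M pol"
  shows "sa_dist M P rho pol (Suc t) = sa_dist M P rho pol t \<bind> nxt M P pol"
proof -
  have "sa_traj M P pol t \<in> (rho \<bind> act_dist M pol) \<rightarrow>\<^sub>M subprob_algebra (SA M)"
    using measurable_prob_algebraD[OF sa_traj_prob_kernel[OF pol]]
      space_prob_algebra_memberD(2)[OF start_prob_algebra[OF pol]]
    by (simp cong: measurable_cong_sets)
  then show ?thesis
    unfolding sa_dist_def sa_traj.simps(2)
    by (rule bind_assoc[OF _ measurable_prob_algebraD[OF nxt_prob_kernel[OF pol]], symmetric])
qed

lemma integral_start:
  fixes h :: "'s \<times> 'a \<Rightarrow> real"
  assumes pol: "measurable_policy M pol"
    and h: "h \<in> borel_measurable (SA M)" and bound: "\<And>x. x \<in> space (SA M) \<Longrightarrow> \<bar>h x\<bar> \<le> B"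
  shows "(\<integral>x. h x \<partial>(rho \<bind> act_dist M pol)) = (\<integral>s. polval (\<lambda>s a. h (s, a)) pol s \<partial>rho)"
proof -
  have "(\<integral>x. h x \<partial>(rho \<bind> act_dist M pol)) = (\<integral>s. (\<integral>x. h x \<partial>act_dist M pol s) \<partial>rho)"
    by (rule integral_bind_prob_algebra[OF rho_prob_algebra act_dist_prob_kernel[OF pol] h bound])
  also have "\<dots> = (\<integral>s. polval (\<lambda>s a. h (s, a)) pol s \<partial>rho)"
    using integral_act_dist[OF _ h] space_prob_algebra_memberD(3)[OF rho_prob_algebra]
    by (intro Bochner_Integration.integral_cong) auto
  finally show ?thesis .
qed

lemma integral_sa_dist_0:
  fixes h :: "'s \<times> 'a \<Rightarrow> real"
  assumes pol: "measurable_policy M pol"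
    and h: "h \<in> borel_measurable (SA M)" and bound: "\<And>x. x \<in> space (SA M) \<Longrightarrow> \<bar>h x\<bar> \<le> B"
  shows "(\<integral>x. h x \<partial>sa_dist M P rho pol 0) = (\<integral>s. polval (\<lambda>s a. h (s, a)) pol s \<partial>rho)"
  using integral_start[OF pol h bound] by (simp add: sa_dist_0[OF pol])

lemma next_value_measurable:
  assumes "measurable_policy M pol" and "(\<lambda>z. f (fst z) (snd z)) \<in> borel_measurable (SA M)"
  shows "next_value pol f \<in> borel_measurable (SA M)"
  using assms unfolding next_value_def[abs_def]
  by (intro integral_kernel_measurable[OF kernel] polval_measurable) auto

lemma next_value_abs_le:
  assumes "measurable_policy M pol" and "(\<lambda>z. f (fst z) (snd z)) \<in> borel_measurable (SA M)"
    and "\<And>s a. \<bar>f s a\<bar> \<le> B" and "x \<in> space (SA M)"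
  shows "\<bar>next_value pol f x\<bar> \<le> B"
  using assms unfolding next_value_def
  by (intro abs_integral_prob_algebra_le[OF measurable_space[OF kernel]]
      polval_measurable polval_abs_le) auto

lemma integral_nxt:
  fixes h :: "'s \<times> 'a \<Rightarrow> real"
  assumes pol: "measurable_policy M pol" and y: "y \<in> space (SA M)"
    and h: "h \<in> borel_measurable (SA M)" and bound: "\<And>x. x \<in> space (SA M) \<Longrightarrow> \<bar>h x\<bar> \<le> B"
  shows "(\<integral>x. h x \<partial>nxt M P pol y) = next_value pol (\<lambda>s a. h (s, a)) y"
proof -
  have Py: "P (fst y) (snd y) \<in> space (prob_algebra M)"
    using measurable_space[OF kernel y] .
  have "(\<integral>x. h x \<partial>nxt M P pol y) = (\<integral>s. (\<integral>x. h x \<partial>act_dist M pol s) \<partial>P (fst y) (snd y))"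
    unfolding nxt_def
    by (rule integral_bind_prob_algebra[OF Py act_dist_prob_kernel[OF pol] h bound])
  also have "\<dots> = next_value pol (\<lambda>s a. h (s, a)) y"
    unfolding next_value_def using integral_act_dist[OF _ h] space_prob_algebra_memberD(3)[OF Py]
    by (intro Bochner_Integration.integral_cong) auto
  finally show ?thesis .
qed

lemma integral_sa_dist_Suc:
  fixes h :: "'s \<times> 'a \<Rightarrow> real"
  assumes pol: "measurable_policy M pol"
    and h: "h \<in> borel_measurable (SA M)" and bound: "\<And>x. x \<in> space (SA M) \<Longrightarrow> \<bar>h x\<bar> \<le> B"
  shows "(\<integral>x. h x \<partial>sa_dist M P rho pol (Suc t))
       = (\<integral>x. next_value pol (\<lambda>s a. h (s, a)) x \<partial>sa_dist M P rho pol t)"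
proof -
  have "(\<integral>x. h x \<partial>sa_dist M P rho pol (Suc t))
      = (\<integral>y. (\<integral>x. h x \<partial>nxt M P pol y) \<partial>sa_dist M P rho pol t)"
    unfolding sa_dist_Suc[OF pol]
    by (rule integral_bind_prob_algebra[OF sa_dist_prob_algebra[OF pol] nxt_prob_kernel[OF pol]
          h bound])
  also have "\<dots> = (\<integral>y. next_value pol (\<lambda>s a. h (s, a)) y \<partial>sa_dist M P rho pol t)"
    using integral_nxt[OF pol _ h bound]
      space_prob_algebra_memberD(3)[OF sa_dist_prob_algebra[OF pol]]
    by (intro Bochner_Integration.integral_cong) auto
  finally show ?thesis .
qed

lemma pmf_geometric_discount: "pmf (geometric_pmf (1 - gamma)) t = gamma ^ t * (1 - gamma)"
  using gamma by simp

lemma occ_eq_bind_geometric: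
  assumes pol: "measurable_policy M pol"
  shows "occupancy pol = measure_pmf (geometric_pmf (1 - gamma)) \<bind> sa_dist M P rho pol"
proof -
  let ?G = "measure_pmf (geometric_pmf (1 - gamma))" and ?D = "sa_dist M P rho pol"
  have G: "?G \<in> space (prob_algebra (count_space UNIV))"
    by (simp add: space_prob_algebra measure_pmf.prob_space_axioms)
  have D: "?D \<in> count_space UNIV \<rightarrow>\<^sub>M prob_algebra (SA M)"
    using sa_dist_prob_algebra[OF pol] by simp
  have sets: "sets (?G \<bind> ?D) = sets (SA M)"
    by (rule sets_bind'[OF G D])
  have "?G \<bind> ?D = measure_of (space (SA M)) (sets (SA M)) (emeasure (?G \<bind> ?D))"
    using measure_of_of_measure[of "?G \<bind> ?D"] sets sets_eq_imp_space_eq[OF sets] by simp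
  also have "\<dots> = occupancy pol"
    unfolding occ_def
  proof (rule measure_of_eq)
    show "sets (SA M) \<subseteq> Pow (space (SA M))"
      by (rule sets.space_closed)
    fix A :: "('s \<times> 'a) set" assume "A \<in> sigma_sets (space (SA M)) (sets (SA M))"
    then have A: "A \<in> sets (SA M)"
      by (simp add: sets.sigma_sets_eq)
    have "emeasure (?G \<bind> ?D) A = (\<integral>\<^sup>+t. emeasure (?D t) A \<partial>?G)"
      by (rule emeasure_bind_prob_algebra[OF G D A])
    also have "\<dots> = (\<Sum>t. ennreal (gamma ^ t * (1 - gamma)) * emeasure (?D t) A)"
      by (simp add: nn_integral_measure_pmf nn_integral_count_space_nat pmf_geometric_discount)
    also have "\<dots> = (\<Sum>t. ennreal (1 - gamma) * (ennreal (gamma ^ t) * emeasure (?D t) A))"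
      using gamma by (simp add: ennreal_mult mult_ac)
    also have "\<dots> = ennreal (1 - gamma) * (\<Sum>t. ennreal (gamma ^ t) * emeasure (?D t) A)"
      by (rule ennreal_suminf_cmult)
    finally show "emeasure (?G \<bind> ?D) A = \<dots>" .
  qed
  finally show ?thesis by simp
qed

lemma occ_prob_algebra:
  assumes pol: "measurable_policy M pol"
  shows "occupancy pol \<in> space (prob_algebra (SA M))"
  unfolding occ_eq_bind_geometric[OF pol]
  using sa_dist_prob_algebra[OF pol]
  by (intro bind_prob_algebra[where L="count_space UNIV"])
    (simp_all add: space_prob_algebra measure_pmf.prob_space_axioms)

lemma integral_occ_suminf:
  fixes h :: "'s \<times> 'a \<Rightarrow> real"
  assumes pol: "measurable_policy M pol"
    and h: "h \<in> borel_measurable (SA M)" and bound: "\<And>x. x \<in> space (SA M) \<Longrightarrow> \<bar>h x\<bar> \<le> B"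
  shows "(\<integral>x. h x \<partial>occupancy pol)
       = (1 - gamma) * (\<Sum>t. gamma ^ t * (\<integral>x. h x \<partial>sa_dist M P rho pol t))"
proof -
  define y where "y t = (\<integral>x. h x \<partial>sa_dist M P rho pol t)" for t
  have y_bound: "\<bar>y t\<bar> \<le> B" for t
    unfolding y_def by (rule abs_integral_prob_algebra_le[OF sa_dist_prob_algebra[OF pol] h bound])
  have "(\<integral>x. h x \<partial>occupancy pol) = (\<integral>t. y t \<partial>measure_pmf (geometric_pmf (1 - gamma)))"
    unfolding occ_eq_bind_geometric[OF pol] y_def using sa_dist_prob_algebra[OF pol]
    by (intro integral_bind_prob_algebra[where L="count_space UNIV", OF _ _ h bound])
      (simp_all add: space_prob_algebra measure_pmf.prob_space_axioms)
  also have "\<dots> = (\<integral>t. pmf (geometric_pmf (1 - gamma)) t * y t \<partial>count_space UNIV)"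
    unfolding measure_pmf_eq_density by (subst integral_density) auto
  also have "\<dots> = (\<Sum>t. pmf (geometric_pmf (1 - gamma)) t * y t)"
  proof (rule integral_count_space_nat)
    have "summable (\<lambda>t. gamma ^ t * ((1 - gamma) * \<bar>y t\<bar>))"
      using gamma y_bound
      by (intro summable_geometric_times_bounded[where B="(1 - gamma) * B"])
        (auto simp: abs_mult intro: mult_left_mono)
    then show "integrable (count_space UNIV) (\<lambda>t. pmf (geometric_pmf (1 - gamma)) t * y t)"
      unfolding integrable_count_space_nat_iff using gamma
      by (simp add: pmf_geometric_discount abs_mult mult_ac)
  qed
  also have "\<dots> = (\<Sum>t. (1 - gamma) * (gamma ^ t * y t))"
    by (simp add: pmf_geometric_discount mult_ac)
  also have "\<dots> = (1 - gamma) * (\<Sum>t. gamma ^ t * y t)"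
    by (rule suminf_mult[OF summable_geometric_times_bounded[OF gamma y_bound]])
  finally show ?thesis by (simp add: y_def)
qed

lemma bounded_measurable_polval:
  assumes pol: "measurable_policy M pol" and f: "bounded_measurable (SA M) f"
  shows "bounded_measurable (SA M) (\<lambda>s a. polval f pol s)"
proof -
  obtain B where f_meas: "(\<lambda>z. f (fst z) (snd z)) \<in> borel_measurable (SA M)" and "\<And>s a. \<bar>f s a\<bar> \<le> B"
    using f unfolding bounded_measurable_def by blast
  then have "\<bar>polval f pol s\<bar> \<le> B" for s
    by (intro polval_abs_le)
  moreover have "polval f pol \<in> borel_measurable M"
    using pol f_meas by (rule polval_measurable)
  then have "(\<lambda>z. polval f pol (fst z)) \<in> borel_measurable (SA M)"
    unfolding SA_def by (rule measurable_compose[OF measurable_fst])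
  ultimately show ?thesis
    unfolding bounded_measurable_def by blast
qed

lemma integral_occ_flow:
  assumes pol: "measurable_policy M pol" and f: "bounded_measurable (SA M) f"
  shows "(\<integral>x. f (fst x) (snd x) \<partial>occupancy pol)
       = (1 - gamma) * (\<integral>s. polval f pol s \<partial>rho)
         + gamma * (\<integral>x. next_value pol f x \<partial>occupancy pol)"
proof -
  obtain B where f_meas: "(\<lambda>z. f (fst z) (snd z)) \<in> borel_measurable (SA M)"
    and f_bound: "\<And>s a. \<bar>f s a\<bar> \<le> B"
    using f unfolding bounded_measurable_def by blast
  define y where "y t = (\<integral>x. f (fst x) (snd x) \<partial>sa_dist M P rho pol t)" for t
  have y_bound: "\<bar>y t\<bar> \<le> B" for t
    unfolding y_def using f_meas f_bound
    by (intro abs_integral_prob_algebra_le[OF sa_dist_prob_algebra[OF pol]]) auto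
  have y_0: "y 0 = (\<integral>s. polval f pol s \<partial>rho)"
    unfolding y_def using f_bound by (subst integral_sa_dist_0[OF pol f_meas]) auto
  have y_Suc: "y (Suc t) = (\<integral>x. next_value pol f x \<partial>sa_dist M P rho pol t)" for t
    unfolding y_def using f_bound by (subst integral_sa_dist_Suc[OF pol f_meas]) auto
  define S where "S = (\<Sum>t. gamma ^ t * y (Suc t))"
  have "(\<integral>x. f (fst x) (snd x) \<partial>occupancy pol) = (1 - gamma) * (\<Sum>t. gamma ^ t * y t)"
    unfolding y_def using f_bound by (intro integral_occ_suminf[OF pol f_meas]) auto
  also have "\<dots> = (1 - gamma) * (y 0 + gamma * S)"
    unfolding S_def by (rule arg_cong[OF suminf_geometric_split_head[OF gamma y_bound]])
  finally have occ_f: "(\<integral>x. f (fst x) (snd x) \<partial>occupancy pol) = (1 - gamma) * (y 0 + gamma * S)" .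
  have occ_next: "(\<integral>x. next_value pol f x \<partial>occupancy pol) = (1 - gamma) * S"
    unfolding S_def y_Suc using next_value_abs_le[OF pol f_meas f_bound]
    by (intro integral_occ_suminf[OF pol next_value_measurable[OF pol f_meas]])
  show ?thesis
    unfolding occ_f occ_next y_0 by (simp add: algebra_simps)
qed

lemma integral_sa_dist:
  fixes h :: "'s \<times> 'a \<Rightarrow> real"
  assumes pol: "measurable_policy M pol"
    and h: "h \<in> borel_measurable (SA M)" and bound: "\<And>x. x \<in> space (SA M) \<Longrightarrow> \<bar>h x\<bar> \<le> B"
  shows "(\<integral>x. h x \<partial>sa_dist M P rho pol t)
       = (\<integral>s. polval (\<lambda>s a. \<integral>z. h z \<partial>sa_traj M P pol t (s, a)) pol s \<partial>rho)"
proof -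
  have "(\<integral>x. h x \<partial>sa_dist M P rho pol t)
      = (\<integral>x. (\<integral>z. h z \<partial>sa_traj M P pol t x) \<partial>(rho \<bind> act_dist M pol))"
    unfolding sa_dist_def
    by (rule integral_bind_prob_algebra[OF start_prob_algebra[OF pol] sa_traj_prob_kernel[OF pol]
          h bound])
  also have "\<dots> = (\<integral>s. polval (\<lambda>s a. \<integral>z. h z \<partial>sa_traj M P pol t (s, a)) pol s \<partial>rho)"
    using h bound measurable_space[OF sa_traj_prob_kernel[OF pol]]
    by (intro integral_start[OF pol integral_kernel_measurable[OF sa_traj_prob_kernel[OF pol] h]]
        abs_integral_prob_algebra_le)
  finally show ?thesis .
qed

lemma Vfun_eq_suminf:
  assumes pol: "measurable_policy M pol"
    and R_meas: "(\<lambda>z. Rw (fst z) (snd z)) \<in> borel_measurable (SA M)"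
    and R_bound: "\<And>s a. \<bar>Rw s a\<bar> \<le> B"
    and s: "s \<in> space M"
  shows "Vfun M P gamma pol Rw s
    = (\<Sum>t. gamma ^ t * polval (\<lambda>s a. \<integral>z. Rw (fst z) (snd z) \<partial>sa_traj M P pol t (s, a)) pol s)"
proof -
  have "\<bar>\<integral>z. Rw (fst z) (snd z) \<partial>sa_traj M P pol t (s, a)\<bar> \<le> B" for t a
    using s R_meas R_bound
    by (intro abs_integral_prob_algebra_le[OF measurable_space[OF sa_traj_prob_kernel[OF pol]]])
      (auto simp: space_SA)
  then have "summable (\<lambda>t. gamma ^ t * (\<integral>z. Rw (fst z) (snd z) \<partial>sa_traj M P pol t (s, a)))" for a
    by (rule summable_geometric_times_bounded[OF gamma])
  then show ?thesis
    unfolding Vfun_def Qfun_def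
    by (subst polval_suminf) (simp_all add: polval_def sum_distrib_left mult_ac)
qed

lemma Jfun_eq_integral_occ:
  assumes pol: "measurable_policy M pol" and Rw: "bounded_measurable (SA M) Rw"
  shows "J pol Rw = (\<integral>x. Rw (fst x) (snd x) \<partial>occupancy pol)"
proof -
  obtain B where R_meas: "(\<lambda>z. Rw (fst z) (snd z)) \<in> borel_measurable (SA M)"
    and R_bound: "\<And>s a. \<bar>Rw s a\<bar> \<le> B"
    using Rw unfolding bounded_measurable_def by blast
  define v where
    "v t s = polval (\<lambda>s a. \<integral>z. Rw (fst z) (snd z) \<partial>sa_traj M P pol t (s, a)) pol s" for t s
  have v_meas: "v t \<in> borel_measurable M" for t
    unfolding v_def[abs_def] using integral_kernel_measurable[OF sa_traj_prob_kernel[OF pol] R_meas]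
    by (intro polval_measurable[OF pol]) simp
  have v_bound: "\<bar>v t s\<bar> \<le> B" if "s \<in> space M" for t s
    unfolding v_def using that R_meas R_bound
    by (intro polval_abs_le
        abs_integral_prob_algebra_le[OF measurable_space[OF sa_traj_prob_kernel[OF pol]]])
      (auto simp: space_SA)
  have "(\<integral>s. Vfun M P gamma pol Rw s \<partial>rho) = (\<integral>s. (\<Sum>t. gamma ^ t * v t s) \<partial>rho)"
    using Vfun_eq_suminf[OF pol R_meas R_bound] space_prob_algebra_memberD(3)[OF rho_prob_algebra]
    by (intro Bochner_Integration.integral_cong) (auto simp: v_def)
  also have "\<dots> = (\<Sum>t. gamma ^ t * (\<integral>s. v t s \<partial>rho))"
    by (rule integral_suminf_geometric[OF gamma rho_prob_algebra v_meas v_bound])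
  also have "\<dots> = (\<Sum>t. gamma ^ t * (\<integral>x. Rw (fst x) (snd x) \<partial>sa_dist M P rho pol t))"
    unfolding v_def using integral_sa_dist[OF pol R_meas, where B=B] R_bound by simp
  moreover have "(\<integral>x. Rw (fst x) (snd x) \<partial>occupancy pol)
      = (1 - gamma) * (\<Sum>t. gamma ^ t * (\<integral>x. Rw (fst x) (snd x) \<partial>sa_dist M P rho pol t))"
    using R_bound by (intro integral_occ_suminf[OF pol R_meas]) auto
  ultimately show ?thesis
    unfolding Jfun_def by simp
qed

lemma measurable_occ:
  "measurable_policy M pol \<Longrightarrow> h \<in> borel_measurable (SA M) \<Longrightarrow> h \<in> borel_measurable (occupancy pol)"
  using space_prob_algebra_memberD(2)[OF occ_prob_algebra] by (simp cong: measurable_cong_sets)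

lemma integrable_occ:
  assumes "measurable_policy M pol" and "bounded_measurable (SA M) f"
  shows "integrable (occupancy pol) (\<lambda>x. f (fst x) (snd x))"
  using assms unfolding bounded_measurable_def
  by (auto intro: integrable_prob_algebra[OF occ_prob_algebra])

lemma Jfun_bounds:
  assumes pol: "measurable_policy M pol"
    and R_meas: "(\<lambda>z. Rw (fst z) (snd z)) \<in> borel_measurable (SA M)"
    and R_range: "\<And>s a. lo \<le> Rw s a \<and> Rw s a \<le> hi"
  shows "lo \<le> J pol Rw" and "J pol Rw \<le> hi"
proof -
  let ?N = "occupancy pol"
  have Rw: "bounded_measurable (SA M) Rw"
    using R_meas R_range by (rule bounded_measurableI)
  interpret prob_space ?N
    using space_prob_algebra_memberD(1)[OF occ_prob_algebra[OF pol]] .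
  have "integrable ?N (\<lambda>x. Rw (fst x) (snd x))"
    by (rule integrable_occ[OF pol Rw])
  then show "lo \<le> J pol Rw" "J pol Rw \<le> hi"
    unfolding Jfun_eq_integral_occ[OF pol Rw] using R_range
    by (auto intro!: integral_ge_const integral_le_const)
qed

lemma Lmu_occ_eq_integral_diff:
  assumes nu: "measurable_policy M nu" and pol: "measurable_policy M pol"
    and f: "bounded_measurable (SA M) f"
  shows "Lmu (occupancy nu) pol f
       = (\<integral>x. polval f pol (fst x) \<partial>occupancy nu) - (\<integral>x. f (fst x) (snd x) \<partial>occupancy nu)"
  unfolding Lmu_def
  using integrable_occ[OF nu bounded_measurable_polval[OF pol f]] integrable_occ[OF nu f]
  by (rule Bochner_Integration.integral_diff)

lemma Lmu_self_eq_0: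
  assumes pol: "measurable_policy M pol" and f: "bounded_measurable (SA M) f"
  shows "Lmu (occupancy pol) pol f = 0"
proof -
  have polval_eq: "polval (\<lambda>s a. polval f pol s) pol = polval f pol"
    by (simp add: polval_const fun_eq_iff)
  then have "next_value pol (\<lambda>s a. polval f pol s) = next_value pol f"
    by (simp add: next_value_def[abs_def])
  then show ?thesis
    unfolding Lmu_occ_eq_integral_diff[OF pol pol f]
    using integral_occ_flow[OF pol bounded_measurable_polval[OF pol f]] integral_occ_flow[OF pol f]
    by (simp add: polval_eq)
qed

lemma bellman_residual_bounded_measurable:
  assumes pol: "measurable_policy M pol"
    and Rw: "bounded_measurable (SA M) Rw" and f: "bounded_measurable (SA M) f"
  shows "(\<lambda>z. bellman_residual pol Rw f z) \<in> borel_measurable (SA M)"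
    and "\<exists>B. \<forall>z\<in>space (SA M). \<bar>bellman_residual pol Rw f z\<bar> \<le> B"
proof -
  obtain Bf where f_meas: "(\<lambda>z. f (fst z) (snd z)) \<in> borel_measurable (SA M)"
    and f_bound: "\<And>s a. \<bar>f s a\<bar> \<le> Bf"
    using f unfolding bounded_measurable_def by blast
  obtain BR where R_meas: "(\<lambda>z. Rw (fst z) (snd z)) \<in> borel_measurable (SA M)"
    and R_bound: "\<And>s a. \<bar>Rw s a\<bar> \<le> BR"
    using Rw unfolding bounded_measurable_def by blast
  have bellman: "bellman P gamma pol Rw f (fst z) (snd z)
      = Rw (fst z) (snd z) + gamma * next_value pol f z" for z
    by (simp add: bellman_eq_next_value)
  note next_value_measurable[OF pol f_meas, measurable] R_meas[measurable] f_meas[measurable]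
  show "(\<lambda>z. bellman_residual pol Rw f z) \<in> borel_measurable (SA M)"
    unfolding bellman by measurable
  have "\<bar>bellman_residual pol Rw f z\<bar> \<le> Bf + BR + Bf"
    if "z \<in> space (SA M)" for z
  proof -
    have "\<bar>gamma * next_value pol f z\<bar> \<le> 1 * Bf"
      unfolding abs_mult using gamma next_value_abs_le[OF pol f_meas f_bound that]
      by (intro mult_mono) auto
    then show ?thesis
      unfolding bellman using f_bound[of "fst z" "snd z"] R_bound[of "fst z" "snd z"] by linarith
  qed
  then show "\<exists>B. \<forall>z\<in>space (SA M). \<bar>bellman_residual pol Rw f z\<bar> \<le> B"
    by blast
qed

lemma bellman_consistent_if_norm2_le_0:
  assumes nu: "measurable_policy M nu" and pol: "measurable_policy M pol"
    and Rw: "bounded_measurable (SA M) Rw" and f: "bounded_measurable (SA M) f"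
    and norm: "(norm2 (occupancy nu) (\<lambda>s a. f s a - bellman P gamma pol Rw f s a))\<^sup>2 \<le> 0"
  shows "bellman_consistent nu pol Rw f"
proof -
  note residual = bellman_residual_bounded_measurable[OF pol Rw f]
  obtain B where B: "\<And>z. z \<in> space (SA M) \<Longrightarrow> \<bar>bellman_residual pol Rw f z\<bar> \<le> B"
    using residual(2) by blast
  have "integrable (occupancy nu) (\<lambda>z. (bellman_residual pol Rw f z)\<^sup>2)"
  proof (rule integrable_prob_algebra[OF occ_prob_algebra[OF nu]])
    show "(\<lambda>z. (bellman_residual pol Rw f z)\<^sup>2) \<in> borel_measurable (SA M)"
      using residual(1) by measurable
    show "\<bar>(bellman_residual pol Rw f z)\<^sup>2\<bar> \<le> B\<^sup>2" if "z \<in> space (SA M)" for z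
      using power_mono[OF B[OF that] abs_ge_zero, of 2] by simp
  qed
  from AE_zero_if_norm2_le_0[OF this norm] show ?thesis
    by simp
qed

lemma integral_occ_bellman_consistent:
  assumes nu: "measurable_policy M nu" and pol: "measurable_policy M pol"
    and Rw: "bounded_measurable (SA M) Rw" and f: "bounded_measurable (SA M) f"
    and fixpoint: "bellman_consistent nu pol Rw f"
  shows "(\<integral>z. f (fst z) (snd z) \<partial>occupancy nu)
       = J nu Rw + gamma * (\<integral>z. next_value pol f z \<partial>occupancy nu)"
proof -
  obtain Bf where f_meas: "(\<lambda>z. f (fst z) (snd z)) \<in> borel_measurable (SA M)"
    and f_bound: "\<And>s a. \<bar>f s a\<bar> \<le> Bf"
    using f unfolding bounded_measurable_def by blast
  have next_integrable: "integrable (occupancy nu) (next_value pol f)"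
    using next_value_abs_le[OF pol f_meas f_bound]
    by (intro integrable_prob_algebra[OF occ_prob_algebra[OF nu]]
        next_value_measurable[OF pol f_meas])
  have "(\<integral>z. f (fst z) (snd z) \<partial>occupancy nu)
      = (\<integral>z. Rw (fst z) (snd z) + gamma * next_value pol f z \<partial>occupancy nu)"
    using fixpoint f_meas next_value_measurable[OF pol f_meas] Rw
    by (intro integral_cong_AE measurable_occ[OF nu])
      (auto simp: bellman_eq_next_value bounded_measurable_def)
  also have "\<dots> = J nu Rw + gamma * (\<integral>z. next_value pol f z \<partial>occupancy nu)"
    using integrable_occ[OF nu Rw] next_integrable by (simp add: Jfun_eq_integral_occ[OF nu Rw])
  finally show ?thesis .
qed

lemma Lmu_eq_Jfun_diff:
  assumes pol: "measurable_policy M pol" and mu: "measurable_policy M mu"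
    and Rw: "bounded_measurable (SA M) Rw" and f: "bounded_measurable (SA M) f"
    and fixpoint_pol: "bellman_consistent pol pol Rw f"
    and fixpoint_mu: "bellman_consistent mu pol Rw f"
  shows "Lmu (occupancy mu) pol f = J pol Rw - J mu Rw"
proof -
  have polval_eq: "polval (\<lambda>s a. polval f pol s) mu = polval f pol"
    by (simp add: polval_const fun_eq_iff)
  then have next_value_eq: "next_value mu (\<lambda>s a. polval f pol s) = next_value pol f"
    by (simp add: next_value_def[abs_def])
  have "J pol Rw = (1 - gamma) * (\<integral>s. polval f pol s \<partial>rho)"
    using integral_occ_flow[OF pol f] integral_occ_bellman_consistent[OF pol pol Rw f fixpoint_pol]
    by simp
  moreover have "(\<integral>z. polval f pol (fst z) \<partial>occupancy mu)
      = (1 - gamma) * (\<integral>s. polval f pol s \<partial>rho) + gamma * (\<integral>z. next_value pol f z \<partial>occupancy mu)"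
    using integral_occ_flow[OF mu bounded_measurable_polval[OF pol f]]
    by (simp add: polval_eq next_value_eq)
  ultimately show ?thesis
    unfolding Lmu_occ_eq_integral_diff[OF mu pol f]
      integral_occ_bellman_consistent[OF mu pol Rw f fixpoint_mu]
    by simp
qed

lemma regularized_minimizer_le_Jfun_diff:
  fixes kappa beta :: real
  assumes policies: "\<And>p. p \<in> Policies \<Longrightarrow> measurable_policy M p"
    and pol: "pol \<in> Policies" and mu: "mu \<in> Policies"
    and Rw: "bounded_measurable (SA M) Rw" and F: "\<And>f. f \<in> F \<Longrightarrow> bounded_measurable (SA M) f"
    and realizable: "\<exists>f\<in>F. \<forall>pol'\<in>Policies.
      (norm2 (occupancy pol') (\<lambda>s a. f s a - bellman P gamma pol Rw f s a))\<^sup>2 \<le> 0"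
    and W: "W \<noteq> {}" "\<And>w. w \<in> W \<Longrightarrow> (\<lambda>z. w (fst z) (snd z)) \<in> borel_measurable (SA M)"
      "\<And>w s a. w \<in> W \<Longrightarrow> \<bar>w s a\<bar> \<le> Bw"
    and beta: "0 \<le> beta"
    and minimizer: "f' \<in> F \<and> (\<forall>f\<in>F.
          kappa * Lmu (occupancy mu) pol f'
            + beta * Emu (occupancy mu) W f' (bellman P gamma pol Rw f')
        \<le> kappa * Lmu (occupancy mu) pol f
            + beta * Emu (occupancy mu) W f (bellman P gamma pol Rw f))"
  shows "kappa * Lmu (occupancy mu) pol f' \<le> kappa * (J pol Rw - J mu Rw)"
proof -
  obtain f where f: "f \<in> F" and consistent: "\<forall>pol'\<in>Policies.
      (norm2 (occupancy pol') (\<lambda>s a. f s a - bellman P gamma pol Rw f s a))\<^sup>2 \<le> 0"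
    using realizable ..
  have fixpoint: "bellman_consistent nu pol Rw f"
    if "nu \<in> Policies" for nu
    using consistent that
    by (intro bellman_consistent_if_norm2_le_0[OF policies[OF that] policies[OF pol] Rw F[OF f]])
      auto
  note residual' = bellman_residual_bounded_measurable[OF policies[OF pol] Rw F[of f']]
  obtain B where "\<And>z. z \<in> space (SA M) \<Longrightarrow> \<bar>bellman_residual pol Rw f' z\<bar> \<le> B"
    using residual'(2) minimizer by blast
  then have "0 \<le> Emu (occupancy mu) W f' (bellman P gamma pol Rw f')"
    using W residual'(1) minimizer
    by (intro Emu_nonneg[where Bw=Bw and Bd=B, OF occ_prob_algebra[OF policies[OF mu]]]) auto
  with beta have "0 \<le> beta * Emu (occupancy mu) W f' (bellman P gamma pol Rw f')"
    by simp
  moreover have "Emu (occupancy mu) W f (bellman P gamma pol Rw f) = 0"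
    by (rule Emu_eq_0_if_AE[OF W(1) fixpoint[OF mu]])
  moreover have "Lmu (occupancy mu) pol f = J pol Rw - J mu Rw"
    by (rule Lmu_eq_Jfun_diff[OF policies[OF pol] policies[OF mu] Rw F[OF f]
          fixpoint[OF pol] fixpoint[OF mu]])
  ultimately show ?thesis
    using minimizer f by fastforce
qed

end

section \<open>Policy improvement under the constraint penalty\<close>

lemma penalized_improvement_bounds:
  fixes lambda adv_r adv_c Jr Jr' Jc Jc' :: real
  assumes lambda: "0 < lambda" and objective: "lambda * max adv_c 0 \<le> adv_r"
    and reward: "adv_r \<le> Jr' - Jr" and reward_range: "Jr' - Jr \<le> 1" and cost: "Jc' - Jc \<le> adv_c"
  shows "Jr' \<ge> Jr \<and> max Jc' 0 \<le> max Jc 0 + 1 / lambda"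
proof -
  have "0 \<le> lambda * max adv_c 0"
    using lambda by simp
  moreover have "max adv_c 0 \<le> 1 / lambda"
    using objective reward reward_range by (simp add: pos_le_divide_eq[OF lambda] mult.commute)
  moreover have "0 < 1 / lambda"
    using lambda by simp
  ultimately show ?thesis
    using objective reward cost by linarith
qed

theorem theorem1:
  fixes M :: "'s measure"
    and P :: "'s \<Rightarrow> 'a::finite \<Rightarrow> 's measure"
    and R C :: "'s \<Rightarrow> 'a \<Rightarrow> real"
    and gamma :: real
    and rho :: "'s measure"
    and Pi :: "('s \<Rightarrow> 'a pmf) set"
    and F G W :: "('s \<Rightarrow> 'a \<Rightarrow> real) set"
    and Bw :: real
    and mu :: "'s \<Rightarrow> 'a pmf"
    and beta lambda :: real
    and fr fc :: "('s \<Rightarrow> 'a pmf) \<Rightarrow> ('s \<Rightarrow> 'a \<Rightarrow> real)"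
    and pihat :: "'s \<Rightarrow> 'a pmf"
  assumes gamma: "0 \<le> gamma" "gamma < 1"
    and kernel: "(\<lambda>x. P (fst x) (snd x)) \<in> SA M \<rightarrow>\<^sub>M prob_algebra M"
    and rho: "prob_space rho" "sets rho = sets M"
    and R_meas: "(\<lambda>x. R (fst x) (snd x)) \<in> borel_measurable (SA M)"
    and C_meas: "(\<lambda>x. C (fst x) (snd x)) \<in> borel_measurable (SA M)"
    and R_range: "\<And>s a. 0 \<le> R s a \<and> R s a \<le> 1"
    and C_range: "\<And>s a. -1 \<le> C s a \<and> C s a \<le> 1"
    and Pi_meas: "\<And>pol a. pol \<in> Pi \<Longrightarrow> (\<lambda>s. pmf (pol s) a) \<in> borel_measurable M"
    and F_meas: "\<And>f. f \<in> F \<Longrightarrow> (\<lambda>x. f (fst x) (snd x)) \<in> borel_measurable (SA M)"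
    and F_range: "\<And>f s a. f \<in> F \<Longrightarrow> 0 \<le> f s a \<and> f s a \<le> 1 / (1 - gamma)"
    and G_meas: "\<And>g. g \<in> G \<Longrightarrow> (\<lambda>x. g (fst x) (snd x)) \<in> borel_measurable (SA M)"
    and G_range: "\<And>g s a. g \<in> G \<Longrightarrow> - (1 / (1 - gamma)) \<le> g s a \<and> g s a \<le> 1 / (1 - gamma)"
    and W_meas: "\<And>w. w \<in> W \<Longrightarrow> (\<lambda>x. w (fst x) (snd x)) \<in> borel_measurable (SA M)"
    and W_range: "\<And>w s a. w \<in> W \<Longrightarrow> 0 \<le> w s a \<and> w s a \<le> Bw"
    and W_one: "(\<lambda>s a. 1) \<in> W"
    and realiz_r: "\<And>pol. pol \<in> Pi \<Longrightarrow> \<exists>f\<in>F. \<forall>pol'\<in>Pi.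
                      (norm2 (occ M P gamma rho pol') (\<lambda>s a. f s a - bellman P gamma pol R f s a))\<^sup>2 \<le> 0"
    and realiz_c: "\<And>pol. pol \<in> Pi \<Longrightarrow> \<exists>g\<in>G. \<forall>pol'\<in>Pi.
                      (norm2 (occ M P gamma rho pol') (\<lambda>s a. g s a - bellman P gamma pol C g s a))\<^sup>2 \<le> 0"
    and mu_in: "mu \<in> Pi"
    and beta: "0 \<le> beta"
    and lambda: "0 < lambda"
    and fr_opt: "\<And>pol. pol \<in> Pi \<Longrightarrow> fr pol \<in> F \<and>
        (\<forall>f\<in>F. Lmu (occ M P gamma rho mu) pol (fr pol)
                  + beta * Emu (occ M P gamma rho mu) W (fr pol) (bellman P gamma pol R (fr pol))
               \<le> Lmu (occ M P gamma rho mu) pol f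
                  + beta * Emu (occ M P gamma rho mu) W f (bellman P gamma pol R f))"
    and fc_opt: "\<And>pol. pol \<in> Pi \<Longrightarrow> fc pol \<in> G \<and>
        (\<forall>g\<in>G. - lambda * Lmu (occ M P gamma rho mu) pol (fc pol)
                  + beta * Emu (occ M P gamma rho mu) W (fc pol) (bellman P gamma pol C (fc pol))
               \<le> - lambda * Lmu (occ M P gamma rho mu) pol g
                  + beta * Emu (occ M P gamma rho mu) W g (bellman P gamma pol C g))"
    and pihat_opt: "pihat \<in> Pi \<and>
        (\<forall>pol\<in>Pi. Lmu (occ M P gamma rho mu) pol (fr pol)
                    - lambda * max (Lmu (occ M P gamma rho mu) pol (fc pol)) 0
                 \<le> Lmu (occ M P gamma rho mu) pihat (fr pihat)
                    - lambda * max (Lmu (occ M P gamma rho mu) pihat (fc pihat)) 0)"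
  shows "Jfun M P gamma rho pihat R \<ge> Jfun M P gamma rho mu R
       \<and> max (Jfun M P gamma rho pihat C) 0 \<le> max (Jfun M P gamma rho mu C) 0 + 1 / lambda"
proof -
  interpret discounted_mdp M P gamma rho
    by (rule discounted_mdp.intro[OF gamma kernel rho])
  have policy: "measurable_policy M pol" if "pol \<in> Pi" for pol
    using Pi_meas[OF that] by (simp add: measurable_policy_def)
  have bounded: "bounded_measurable (SA M) R" "bounded_measurable (SA M) C"
    "f \<in> F \<Longrightarrow> bounded_measurable (SA M) f" "g \<in> G \<Longrightarrow> bounded_measurable (SA M) g" for f g
    using bounded_measurableI[OF R_meas R_range] bounded_measurableI[OF C_meas C_range]
      bounded_measurableI[OF F_meas[of f] F_range[of f]]
      bounded_measurableI[OF G_meas[of g] G_range[of g]]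
    by auto
  have W: "W \<noteq> {}" "\<And>w s a. w \<in> W \<Longrightarrow> \<bar>w s a\<bar> \<le> Bw"
    using W_one W_range by fastforce+
  have reward: "1 * Lmu (occupancy mu) pol (fr pol) \<le> 1 * (J pol R - J mu R)"
    if pol: "pol \<in> Pi" for pol
    using fr_opt[OF pol] W W_meas
    by (intro regularized_minimizer_le_Jfun_diff[OF policy pol mu_in bounded(1,3) realiz_r[OF pol]
          _ _ _ beta]) auto
  have cost: "- lambda * Lmu (occupancy mu) pol (fc pol) \<le> - lambda * (J pol C - J mu C)"
    if pol: "pol \<in> Pi" for pol
    using fc_opt[OF pol] W W_meas
    by (intro regularized_minimizer_le_Jfun_diff[OF policy pol mu_in bounded(2,4) realiz_c[OF pol]
          _ _ _ beta]) auto
  have "Lmu (occupancy mu) mu (fr mu) = 0" "Lmu (occupancy mu) mu (fc mu) = 0"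
    using Lmu_self_eq_0[OF policy[OF mu_in]] bounded fr_opt[OF mu_in] fc_opt[OF mu_in] by auto
  then have "lambda * max (Lmu (occupancy mu) pihat (fc pihat)) 0
      \<le> Lmu (occupancy mu) pihat (fr pihat)"
    using pihat_opt mu_in by fastforce
  moreover have "J pihat R - J mu R \<le> 1"
    using Jfun_bounds[OF policy R_meas R_range] pihat_opt mu_in by fastforce
  ultimately show ?thesis
    using reward[of pihat] cost[of pihat] pihat_opt lambda
    by (intro penalized_improvement_bounds) auto
qed

end
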